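(* Let $X$ be a totally disconnected compact metric space and $(X,\alpha,\mathbb{Z}^+)$ a dynamical system given by a continuous surjection $\alpha:X\to X$. If the system admits a forward Li-Yorke pair, then the Ellis semigroup $E(X,\mathbb{Z}^+)$ is not completely regular.
   Context: $E(X,\mathbb{Z}^+)$ is the closure of $\{\alpha^n:n\ge 0\}$ in $X^X$ (maps $X\to X$, pointwise convergence topology, composition as product). A semigroup is completely regular if for every element $a$ there exists $x$ with $a=axa$ and $ax=xa$. A pair $x,y\in X$ is a forward Li-Yorke pair if it is forward proximal, i.e. $\inf_{n\ge0}d(\alpha^nx,\alpha^ny)=0$, but not forward asymptotic, i.e. not $\lim_{n\to+\infty}d(\alpha^nx,\alpha^ny)=0$. *)

theory Defs
  imports "HOL-Analysis.Analysis"
begin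

definition totally_disconnected :: "'a::topological_space set \<Rightarrow> bool" where
  "totally_disconnected X \<longleftrightarrow> (\<forall>S. S \<subseteq> X \<and> connected S \<longrightarrow> (\<exists>a. S \<subseteq> {a}))"

text \<open>Maps X \<rightarrow> X are represented as extensional functions (value undefined off X),
i.e. elements of the product space X^X with the pointwise (product) topology.\<close>
definition maps_top :: "'a::topological_space set \<Rightarrow> ('a \<Rightarrow> 'a) topology" where
  "maps_top X = product_topology (\<lambda>_. top_of_set X) X"

definition mcomp :: "'a set \<Rightarrow> ('a \<Rightarrow> 'a) \<Rightarrow> ('a \<Rightarrow> 'a) \<Rightarrow> ('a \<Rightarrow> 'a)" where
  "mcomp X f g = restrict (f \<circ> g) X"

definition ellis_semigroup :: "'a::topological_space set \<Rightarrow> ('a \<Rightarrow> 'a) \<Rightarrow> ('a \<Rightarrow> 'a) set" where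
  "ellis_semigroup X \<alpha> = maps_top X closure_of {restrict (\<alpha> ^^ n) X | n. True}"

definition completely_regular :: "'s set \<Rightarrow> ('s \<Rightarrow> 's \<Rightarrow> 's) \<Rightarrow> bool" where
  "completely_regular S op \<longleftrightarrow>
     (\<forall>a\<in>S. \<exists>x\<in>S. a = op (op a x) a \<and> op a x = op x a)"

definition forward_Li_Yorke_pair :: "'a::metric_space set \<Rightarrow> ('a \<Rightarrow> 'a) \<Rightarrow> 'a \<Rightarrow> 'a \<Rightarrow> bool" where
  "forward_Li_Yorke_pair X \<alpha> x y \<longleftrightarrow> x \<in> X \<and> y \<in> X \<and>
     (INF n. dist ((\<alpha> ^^ n) x) ((\<alpha> ^^ n) y)) = 0 \<and>
     \<not> ((\<lambda>n. dist ((\<alpha> ^^ n) x) ((\<alpha> ^^ n) y)) \<longlonglongrightarrow> 0)"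

end

theory Submission
  imports Defs
begin

text \<open>
  Cut X into finitely many clopen cells smaller than the distance by which the orbits of the
  Li-Yorke pair (x, y) keep separating, and follow the itineraries of points through the cells.
  Proximality gives, for every K, a time m at which the itineraries of x and y differ while
  they agree at the times m + 1, ..., m + K. By compactness of X^X some q in E is a limit of
  such iterates \<alpha>^m: then q x and q y lie in different cells, but \<alpha> (q x) and \<alpha> (q y) have
  the same itinerary. Every element of E preserves equality of itineraries, and every element
  other than the identity is a limit of iterates \<alpha>^n with n \<ge> 1, so it maps (q x, q y) to a
  pair with equal itineraries. As q is not the identity, q z q \<noteq> q for all z in E: q is not
  even regular.
\<close>

definition locally_constant_on :: "'a::topological_space set \<Rightarrow> ('a \<Rightarrow> 'b) \<Rightarrow> bool" where
  "locally_constant_on X c \<longleftrightarrow> (\<forall>u\<in>X. openin (top_of_set X) {v \<in> X. c v = c u})"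

lemma funpow_image_subset:
  assumes "\<alpha> ` X \<subseteq> X"
  shows "(\<alpha> ^^ n) ` X \<subseteq> X"
  by (induction n) (use assms in auto)

lemma continuous_on_funpow:
  assumes "continuous_on X \<alpha>" "\<alpha> ` X \<subseteq> X"
  shows "continuous_on X (\<alpha> ^^ n)"
proof (induction n)
  case (Suc n)
  have "continuous_on ((\<alpha> ^^ n) ` X) \<alpha>"
    using assms continuous_on_subset funpow_image_subset by blast
  then show ?case
    using Suc continuous_on_compose by fastforce
qed (simp add: continuous_on_id)

subsection \<open>Locally constant functions\<close>

lemma locally_constant_on_compose:
  assumes "locally_constant_on X c" "continuous_on X h" "h ` X \<subseteq> X"
  shows "locally_constant_on X (c \<circ> h)"
  unfolding locally_constant_on_def
proof
  fix u assume "u \<in> X"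
  then have "openin (top_of_set X) {w \<in> X. c w = c (h u)}"
    using assms(1,3) unfolding locally_constant_on_def by blast
  then have "openin (top_of_set X) (X \<inter> h -` {w \<in> X. c w = c (h u)})"
    using continuous_openin_preimage[OF assms(2)] assms(3) image_subset_iff_funcset by blast
  moreover have "{v \<in> X. (c \<circ> h) v = (c \<circ> h) u} = X \<inter> h -` {w \<in> X. c w = c (h u)}"
    using assms(3) by auto
  ultimately show "openin (top_of_set X) {v \<in> X. (c \<circ> h) v = (c \<circ> h) u}"
    by simp
qed

lemma locally_constant_on_restrict_family:
  assumes "finite J" "\<And>j. j \<in> J \<Longrightarrow> locally_constant_on X (g j)"
  shows "locally_constant_on X (\<lambda>u. \<lambda>j\<in>J. g j u)"
  unfolding locally_constant_on_def
proof
  fix u assume "u \<in> X"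
  have "{v \<in> X. (\<lambda>j\<in>J. g j v) = (\<lambda>j\<in>J. g j u)} =
        (\<Inter>j\<in>J. {v \<in> X. g j v = g j u}) \<inter> topspace (top_of_set X)"
  proof -
    have "(\<lambda>j\<in>J. g j v) = (\<lambda>j\<in>J. g j u) \<longleftrightarrow> (\<forall>j\<in>J. g j v = g j u)" for v
      by (auto simp: fun_eq_iff)
    then show ?thesis
      by auto
  qed
  also have "openin (top_of_set X) \<dots>"
    using assms \<open>u \<in> X\<close> unfolding locally_constant_on_def by (intro openin_INT) auto
  finally show "openin (top_of_set X) {v \<in> X. (\<lambda>j\<in>J. g j v) = (\<lambda>j\<in>J. g j u)}" .
qed

lemma locally_constant_on_clopen_cover_label:
  assumes "finite \<F>" "\<And>U. U \<in> \<F> \<Longrightarrow> openin (top_of_set X) U \<and> closedin (top_of_set X) U"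
  shows "locally_constant_on X (\<lambda>v. {U \<in> \<F>. v \<in> U})"
  unfolding locally_constant_on_def
proof
  fix u assume "u \<in> X"
  have "{v \<in> X. {U \<in> \<F>. v \<in> U} = {U \<in> \<F>. u \<in> U}} =
        (\<Inter>U\<in>\<F>. if u \<in> U then U else X - U) \<inter> topspace (top_of_set X)"
    by auto
  also have "openin (top_of_set X) \<dots>"
  proof (rule openin_INT[OF assms(1)])
    fix U assume "U \<in> \<F>"
    then show "openin (top_of_set X) (if u \<in> U then U else X - U)"
      using assms(2) by (simp add: openin_diff)
  qed
  finally show "openin (top_of_set X) {v \<in> X. {U \<in> \<F>. v \<in> U} = {U \<in> \<F>. u \<in> U}}" .
qed

lemma diameter_pair: "diameter {u, v} = dist u v"
proof -
  have "(\<lambda>(x, y). dist x y) ` ({u, v} \<times> {u, v}) = {0, dist u v}"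
    by (auto simp: dist_commute)
  moreover have "Sup {0, dist u v} = dist u v"
    by (rule cSup_eq_maximum) auto
  ultimately show ?thesis
    unfolding diameter_def by simp
qed

lemma locally_constant_on_compact_uniformly:
  fixes X :: "'a::metric_space set"
  assumes "compact X" "locally_constant_on X g"
  obtains \<delta> where "\<delta> > 0" "\<And>u v. \<lbrakk>u \<in> X; v \<in> X; dist u v < \<delta>\<rbrakk> \<Longrightarrow> g u = g v"
proof (cases "X = {}")
  case False
  have "\<forall>w\<in>X. \<exists>W. open W \<and> {v \<in> X. g v = g w} = X \<inter> W"
    using assms(2) unfolding locally_constant_on_def openin_open by blast
  then obtain W where W: "\<And>w. w \<in> X \<Longrightarrow> open (W w) \<and> {v \<in> X. g v = g w} = X \<inter> W w"
    by metis
  have cover: "X \<subseteq> \<Union>(W ` X)"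
  proof
    fix w assume "w \<in> X"
    then have "w \<in> X \<inter> W w"
      using W[of w] by blast
    then show "w \<in> \<Union>(W ` X)"
      using \<open>w \<in> X\<close> by blast
  qed
  moreover have "W ` X \<noteq> {}"
    using False by simp
  moreover have "\<And>B. B \<in> W ` X \<Longrightarrow> open B"
    using W by auto
  ultimately obtain \<delta> where "\<delta> > 0" and \<delta>: "\<And>T. \<lbrakk>T \<subseteq> X; diameter T < \<delta>\<rbrakk> \<Longrightarrow> \<exists>B \<in> W ` X. T \<subseteq> B"
    using Lebesgue_number_lemma[OF assms(1)] by metis
  show ?thesis
  proof (rule that[OF \<open>\<delta> > 0\<close>])
    fix u v assume "u \<in> X" "v \<in> X" "dist u v < \<delta>"
    then obtain w where "w \<in> X" "{u, v} \<subseteq> W w"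
      using \<delta>[of "{u, v}"] by (auto simp: diameter_pair)
    then have "u \<in> {v \<in> X. g v = g w}" "v \<in> {v \<in> X. g v = g w}"
      using W[of w] \<open>u \<in> X\<close> \<open>v \<in> X\<close> by auto
    then show "g u = g v"
      by simp
  qed
qed (use that[of 1] in simp)

subsection \<open>Clopen partitions of totally disconnected compact spaces\<close>

lemma totally_disconnected_compact_quasi_component_of:
  fixes X :: "'a::metric_space set"
  assumes "compact X" "totally_disconnected X" "u \<in> X"
  shows "quasi_component_of_set (top_of_set X) u = {u}"
proof -
  let ?T = "top_of_set X"
  have u_in: "u \<in> connected_component_of_set ?T u"
    using assms(3) by (simp add: connected_component_of_refl)
  have "connected_component_of_set ?T u \<subseteq> {u}"
  proof -
    have "connected (connected_component_of_set ?T u)" "connected_component_of_set ?T u \<subseteq> X"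
      using connectedin_connected_component_of[of ?T u]
      by (auto simp: connectedin_subtopology connectedin_iff_connected)
    then obtain a where "connected_component_of_set ?T u \<subseteq> {a}"
      using assms(2) unfolding totally_disconnected_def by blast
    then show ?thesis
      using u_in by blast
  qed
  then have "connected_component_of_set ?T u = {u}"
    using u_in by blast
  moreover have "quasi_component_of ?T u = connected_component_of ?T u"
  proof -
    have "compact_space ?T"
      using assms(1) by (simp add: compact_space_subtopology compactin_euclidean_iff)
    moreover have "Hausdorff_space ?T"
      by (simp add: Hausdorff_space_subtopology Hausdorff_space_euclidean)
    ultimately show ?thesis
      by (intro quasi_eq_connected_component_of) blast
  qed
  ultimately show ?thesis
    by simp
qed

lemma totally_disconnected_compact_clopen_nbhd:
  fixes X :: "'a::metric_space set"
  assumes "compact X" "totally_disconnected X" "u \<in> X" "e > 0"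
  obtains U where "openin (top_of_set X) U" "closedin (top_of_set X) U" "u \<in> U" "U \<subseteq> ball u e"
proof -
  let ?T = "top_of_set X"
  have "{u} \<in> quasi_components_of ?T"
    using totally_disconnected_compact_quasi_component_of[OF assms(1-3)] assms(3)
    unfolding quasi_components_of_def by force
  moreover have "compactin ?T (X - ball u e)"
    using assms(1) by (auto simp: compactin_subtopology compactin_euclidean_iff intro: compact_diff)
  moreover have "disjnt {u} (X - ball u e)"
    using assms(4) by auto
  ultimately have "separated_between ?T {u} (X - ball u e)"
    using separated_between_quasi_component_compact by blast
  then obtain U V where "openin ?T U" "openin ?T V" "U \<union> V = X" "disjnt U V" "u \<in> U"
      "X - ball u e \<subseteq> V"
    unfolding separated_between_def by auto
  moreover have "closedin ?T U"
  proof -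
    have "U = X - V"
      using \<open>U \<union> V = X\<close> \<open>disjnt U V\<close> by (auto simp: disjnt_def)
    then show ?thesis
      using \<open>openin ?T V\<close> by (simp add: closedin_diff)
  qed
  moreover have "U \<subseteq> ball u e"
    using \<open>U \<union> V = X\<close> \<open>disjnt U V\<close> \<open>X - ball u e \<subseteq> V\<close> by (auto simp: disjnt_def)
  ultimately show ?thesis
    using that by blast
qed

lemma totally_disconnected_compact_locally_constant_partition:
  fixes X :: "'a::metric_space set"
  assumes "compact X" "totally_disconnected X" "e > 0"
  obtains c :: "'a \<Rightarrow> 'a set set"
  where "locally_constant_on X c" "\<And>u v. \<lbrakk>u \<in> X; v \<in> X; c u = c v\<rbrakk> \<Longrightarrow> dist u v < e"
proof -
  let ?T = "top_of_set X"
  define \<G> where "\<G> = {U. openin ?T U \<and> closedin ?T U \<and> (\<exists>w. U \<subseteq> ball w (e/2))}"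
  have "X \<subseteq> \<Union>\<G>"
  proof
    fix u assume "u \<in> X"
    then obtain U where "openin ?T U" "closedin ?T U" "u \<in> U" "U \<subseteq> ball u (e/2)"
      using totally_disconnected_compact_clopen_nbhd assms half_gt_zero by metis
    then show "u \<in> \<Union>\<G>"
      unfolding \<G>_def by blast
  qed
  moreover have "compactin ?T X"
    using assms(1) by (simp add: compactin_subtopology compactin_euclidean_iff)
  moreover have "\<forall>U\<in>\<G>. openin ?T U"
    unfolding \<G>_def by blast
  ultimately obtain \<F> where \<F>: "finite \<F>" "\<F> \<subseteq> \<G>" "X \<subseteq> \<Union>\<F>"
    unfolding compactin_def by meson
  define c where "c v = {U \<in> \<F>. v \<in> U}" for v
  show ?thesis
  proof
    show "locally_constant_on X c"
      unfolding c_def using \<F>(1,2)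
      by (intro locally_constant_on_clopen_cover_label) (auto simp: \<G>_def)
  next
    fix u v assume "u \<in> X" "v \<in> X" "c u = c v"
    then obtain U where "U \<in> \<F>" "u \<in> U" "v \<in> U"
      using \<F>(3) unfolding c_def by blast
    moreover obtain w where "U \<subseteq> ball w (e/2)"
      using \<open>U \<in> \<F>\<close> \<F>(2) unfolding \<G>_def by blast
    ultimately have "dist u w < e/2" "dist v w < e/2"
      by (auto simp: dist_commute)
    then show "dist u v < e"
      by (rule dist_triangle_half_l)
  qed
qed

subsection \<open>The Ellis semigroup\<close>

definition itinerary :: "('a \<Rightarrow> 'b) \<Rightarrow> ('a \<Rightarrow> 'a) \<Rightarrow> 'a \<Rightarrow> nat \<Rightarrow> 'b" where
  "itinerary c \<alpha> u n = c ((\<alpha> ^^ n) u)"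

lemma itinerary_apply: "itinerary c \<alpha> (\<alpha> u) i = itinerary c \<alpha> u (Suc i)"
  by (simp add: itinerary_def funpow_swap1)

lemma frequently_itinerary_ne_imp_itinerary_apply_ne:
  assumes "\<exists>\<^sub>F n in sequentially. itinerary c \<alpha> x n \<noteq> itinerary c \<alpha> y n"
  shows "itinerary c \<alpha> (\<alpha> x) \<noteq> itinerary c \<alpha> (\<alpha> y)"
proof
  assume same: "itinerary c \<alpha> (\<alpha> x) = itinerary c \<alpha> (\<alpha> y)"
  obtain n where "1 \<le> n" "itinerary c \<alpha> x n \<noteq> itinerary c \<alpha> y n"
    using assms unfolding frequently_sequentially by blast
  moreover from \<open>1 \<le> n\<close> obtain k where "n = Suc k"
    by (cases n) auto
  ultimately show False
    using fun_cong[OF same, of k] by (simp add: itinerary_apply)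
qed

lemma topspace_maps_top: "topspace (maps_top X) = (\<Pi>\<^sub>E u\<in>X. X)"
  by (simp add: maps_top_def topspace_product_topology)

lemma compact_space_maps_top:
  assumes "compact X"
  shows "compact_space (maps_top X)"
  using assms unfolding maps_top_def compact_space_product_topology
  by (simp add: compact_space_subtopology compactin_euclidean_iff)

lemma t1_space_maps_top: "t1_space (maps_top (X :: 'a::metric_space set))"
proof -
  have "Hausdorff_space (top_of_set X)"
    by (simp add: Hausdorff_space_subtopology Hausdorff_space_euclidean)
  then show ?thesis
    unfolding maps_top_def by (simp add: Hausdorff_imp_t1_space Hausdorff_space_product_topology)
qed

lemma openin_maps_top_eval:
  assumes "u \<in> X" "openin (top_of_set X) P"
  shows "openin (maps_top X) {h \<in> topspace (maps_top X). h u \<in> P}"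
  unfolding maps_top_def
  by (rule openin_continuous_map_preimage[OF continuous_map_product_projection[OF assms(1)]])
    (simp add: assms(2))

lemma restrict_funpow_in_maps_top:
  assumes "\<alpha> ` X \<subseteq> X"
  shows "restrict (\<alpha> ^^ n) X \<in> topspace (maps_top X)"
  using funpow_image_subset[OF assms, of n] by (auto simp: topspace_maps_top)

lemma ellis_semigroup_apply_in:
  assumes "f \<in> ellis_semigroup X \<alpha>" "u \<in> X"
  shows "f u \<in> X"
proof -
  have "f \<in> topspace (maps_top X)"
    using assms(1) unfolding ellis_semigroup_def in_closure_of by blast
  then show ?thesis
    using assms(2) by (auto simp: topspace_maps_top)
qed

lemma maps_top_closure_of_locally_constant_approx:
  assumes "locally_constant_on X g" "f \<in> maps_top X closure_of A" "u \<in> X" "v \<in> X"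
  obtains a where "a \<in> A" "g (a u) = g (f u)" "g (a v) = g (f v)"
proof -
  have f: "f \<in> topspace (maps_top X)"
    using assms(2) by (simp add: in_closure_of)
  then have "f u \<in> X" "f v \<in> X"
    using assms(3,4) by (auto simp: topspace_maps_top)
  define G where "G = {h \<in> topspace (maps_top X). h u \<in> {w \<in> X. g w = g (f u)}} \<inter>
                      {h \<in> topspace (maps_top X). h v \<in> {w \<in> X. g w = g (f v)}}"
  have "openin (maps_top X) G"
    using assms \<open>f u \<in> X\<close> \<open>f v \<in> X\<close> unfolding G_def locally_constant_on_def
    by (intro openin_Int openin_maps_top_eval) auto
  moreover have "f \<in> G"
    using f \<open>f u \<in> X\<close> \<open>f v \<in> X\<close> unfolding G_def by simp
  ultimately obtain a where "a \<in> A" "a \<in> G"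
    using assms(2) unfolding in_closure_of by blast
  then show ?thesis
    using that unfolding G_def by simp
qed

lemma closure_of_iterates_itinerary_approx:
  assumes "continuous_on X \<alpha>" "\<alpha> ` X \<subseteq> X" "locally_constant_on X c"
    and "f \<in> maps_top X closure_of {restrict (\<alpha> ^^ n) X | n. n \<in> N}" "u \<in> X" "v \<in> X"
  obtains n where "n \<in> N" "itinerary c \<alpha> u (i + n) = itinerary c \<alpha> (f u) i"
    "itinerary c \<alpha> v (i + n) = itinerary c \<alpha> (f v) i"
proof -
  have "locally_constant_on X (c \<circ> \<alpha> ^^ i)"
    using assms(1-3) by (intro locally_constant_on_compose continuous_on_funpow funpow_image_subset)
  then obtain a where "a \<in> {restrict (\<alpha> ^^ n) X | n. n \<in> N}"
    "(c \<circ> \<alpha> ^^ i) (a u) = (c \<circ> \<alpha> ^^ i) (f u)" "(c \<circ> \<alpha> ^^ i) (a v) = (c \<circ> \<alpha> ^^ i) (f v)"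
    using maps_top_closure_of_locally_constant_approx assms(4-6) by blast
  then show ?thesis
    using that assms(5,6) by (auto simp: itinerary_def funpow_add)
qed

lemma closure_of_iterates_preserves_itinerary_eq:
  assumes "continuous_on X \<alpha>" "\<alpha> ` X \<subseteq> X" "locally_constant_on X c"
    and "f \<in> maps_top X closure_of {restrict (\<alpha> ^^ n) X | n. n \<in> N}" "u \<in> X" "v \<in> X"
    and "\<And>n i. n \<in> N \<Longrightarrow> itinerary c \<alpha> u (i + n) = itinerary c \<alpha> v (i + n)"
  shows "itinerary c \<alpha> (f u) = itinerary c \<alpha> (f v)"
proof
  fix i
  obtain n where "n \<in> N" "itinerary c \<alpha> u (i + n) = itinerary c \<alpha> (f u) i"
    "itinerary c \<alpha> v (i + n) = itinerary c \<alpha> (f v) i"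
    using closure_of_iterates_itinerary_approx[OF assms(1-6)] .
  then show "itinerary c \<alpha> (f u) i = itinerary c \<alpha> (f v) i"
    using assms(7)[of n i] by simp
qed

lemma ellis_semigroup_preserves_itinerary_eq:
  assumes "continuous_on X \<alpha>" "\<alpha> ` X \<subseteq> X" "locally_constant_on X c"
    and "f \<in> ellis_semigroup X \<alpha>" "u \<in> X" "v \<in> X" "itinerary c \<alpha> u = itinerary c \<alpha> v"
  shows "itinerary c \<alpha> (f u) = itinerary c \<alpha> (f v)"
  using closure_of_iterates_preserves_itinerary_eq[OF assms(1-3), of f UNIV u v] assms(4-7)
  unfolding ellis_semigroup_def by simp

lemma closure_of_positive_iterates_itinerary_eq:
  assumes "continuous_on X \<alpha>" "\<alpha> ` X \<subseteq> X" "locally_constant_on X c"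
    and "g \<in> maps_top X closure_of {restrict (\<alpha> ^^ n) X | n. n \<in> {1..}}" "u \<in> X" "v \<in> X"
    and "itinerary c \<alpha> (\<alpha> u) = itinerary c \<alpha> (\<alpha> v)"
  shows "itinerary c \<alpha> (g u) = itinerary c \<alpha> (g v)"
proof (rule closure_of_iterates_preserves_itinerary_eq[OF assms(1-6)])
  fix n i :: nat assume "n \<in> {1..}"
  then obtain k where k: "i + n = Suc k"
    by (cases n) auto
  show "itinerary c \<alpha> u (i + n) = itinerary c \<alpha> v (i + n)"
    using fun_cong[OF assms(7), of k] unfolding k by (simp add: itinerary_apply)
qed

lemma maps_top_limit_of_nested_iterates:
  fixes X :: "'a::metric_space set"
  assumes "compact X" "\<alpha> ` X \<subseteq> X" "\<And>K. M K \<noteq> {}" "\<And>K. M (Suc K) \<subseteq> M K"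
  obtains q where "\<And>K. q \<in> maps_top X closure_of {restrict (\<alpha> ^^ m) X | m. m \<in> M K}"
proof -
  define C where "C K = maps_top X closure_of {restrict (\<alpha> ^^ m) X | m. m \<in> M K}" for K
  have "(\<Inter>K. C K) \<noteq> {}"
  proof (rule compact_space_imp_nest[OF compact_space_maps_top[OF assms(1)]])
    show "closedin (maps_top X) (C K)" for K
      unfolding C_def by (rule closedin_closure_of)
    show "C K \<noteq> {}" for K
    proof -
      obtain m where "m \<in> M K"
        using assms(3) by blast
      moreover have "{restrict (\<alpha> ^^ m) X | m. m \<in> M K} \<subseteq> topspace (maps_top X)"
        using restrict_funpow_in_maps_top[OF assms(2)] by blast
      ultimately show ?thesis
        unfolding C_def using closure_of_subset by blast
    qed
    show "decseq C"
    proof (rule decseq_SucI)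
      show "C (Suc K) \<subseteq> C K" for K
        unfolding C_def using assms(4)[of K] by (intro closure_of_mono) blast
    qed
  qed
  then show ?thesis
    using that unfolding C_def by blast
qed

lemma ellis_semigroup_subset_insert_id:
  fixes X :: "'a::metric_space set"
  shows "ellis_semigroup X \<alpha> \<subseteq>
     insert (restrict id X) (maps_top X closure_of {restrict (\<alpha> ^^ n) X | n. n \<in> {1..}})"
proof -
  have iterates_split: "{restrict (\<alpha> ^^ n) X | n. True} =
        {restrict id X} \<union> {restrict (\<alpha> ^^ n) X | n. n \<in> {1..}}"
  proof (intro equalityI subsetI)
    fix g assume "g \<in> {restrict (\<alpha> ^^ n) X | n. True}"
    then obtain n where "g = restrict (\<alpha> ^^ n) X"
      by blast
    then show "g \<in> {restrict id X} \<union> {restrict (\<alpha> ^^ n) X | n. n \<in> {1..}}"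
      by (cases "n = 0") auto
  qed (auto intro: exI[of _ 0])
  have "ellis_semigroup X \<alpha> =
      maps_top X closure_of {restrict id X} \<union>
      maps_top X closure_of {restrict (\<alpha> ^^ n) X | n. n \<in> {1..}}"
    unfolding ellis_semigroup_def iterates_split closure_of_Un ..
  moreover have "maps_top X closure_of {restrict id X} \<subseteq> {restrict id X}"
    using closure_of_singleton[OF t1_space_maps_top[of X]] by auto
  ultimately show ?thesis
    by blast
qed

subsection \<open>Itineraries of a forward Li-Yorke pair\<close>

lemma exists_last_failure_before_run:
  fixes P :: "nat \<Rightarrow> bool"
  assumes "\<not> P d" "d < n" "\<forall>j\<le>K. P (n + j)"
  shows "\<exists>m. \<not> P m \<and> (\<forall>i\<in>{1..K}. P (m + i))"
proof -
  define m where "m = (GREATEST m. m < n \<and> \<not> P m)"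
  have m: "m < n" "\<not> P m"
    using GreatestI_nat[of "\<lambda>m. m < n \<and> \<not> P m" d n] assms(1,2) unfolding m_def by auto
  have m_max: "k \<le> m" if "k < n" "\<not> P k" for k
    using Greatest_le_nat[of "\<lambda>m. m < n \<and> \<not> P m" k n] that unfolding m_def by auto
  have "P (m + i)" if i: "i \<in> {1..K}" for i
  proof (cases "m + i < n")
    case True
    then show ?thesis
      using m_max[of "m + i"] i by fastforce
  next
    case False
    then have "m + i = n + (m + i - n)" "m + i - n \<le> K"
      using m(1) i by auto
    then show ?thesis
      using assms(3) by metis
  qed
  then show ?thesis
    using m(2) by blast
qed

lemma forward_Li_Yorke_pair_iterates_ne:
  assumes "forward_Li_Yorke_pair X \<alpha> x y"
  shows "(\<alpha> ^^ n) x \<noteq> (\<alpha> ^^ n) y"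
proof
  assume eq: "(\<alpha> ^^ n) x = (\<alpha> ^^ n) y"
  have "dist ((\<alpha> ^^ m) x) ((\<alpha> ^^ m) y) = 0" if "n \<le> m" for m
  proof -
    have "\<alpha> ^^ m = \<alpha> ^^ (m - n) \<circ> \<alpha> ^^ n"
      using that by (simp flip: funpow_add)
    then show ?thesis
      using eq by simp
  qed
  then have "(\<lambda>m. dist ((\<alpha> ^^ m) x) ((\<alpha> ^^ m) y)) \<longlonglongrightarrow> 0"
    by (intro tendsto_eventually) (auto simp: eventually_sequentially)
  then show False
    using assms unfolding forward_Li_Yorke_pair_def by blast
qed

lemma forward_Li_Yorke_pair_frequently_close:
  assumes "forward_Li_Yorke_pair X \<alpha> x y" "\<eta> > 0"
  shows "\<exists>\<^sub>F n in sequentially. dist ((\<alpha> ^^ n) x) ((\<alpha> ^^ n) y) < \<eta>"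
proof (rule ccontr)
  define D where "D n = dist ((\<alpha> ^^ n) x) ((\<alpha> ^^ n) y)" for n
  have D_pos: "D n > 0" for n
    using forward_Li_Yorke_pair_iterates_ne[OF assms(1)] unfolding D_def by simp
  assume "\<not> (\<exists>\<^sub>F n in sequentially. dist ((\<alpha> ^^ n) x) ((\<alpha> ^^ n) y) < \<eta>)"
  then obtain N where N: "\<And>n. N \<le> n \<Longrightarrow> \<eta> \<le> D n"
    unfolding not_frequently eventually_sequentially D_def not_less by blast
  define \<mu> where "\<mu> = min \<eta> (Min (D ` {..N}))"
  have "\<mu> > 0"
    using assms(2) D_pos unfolding \<mu>_def by simp
  moreover have "\<mu> \<le> (INF n. D n)"
  proof (rule cINF_greatest)
    fix n
    show "\<mu> \<le> D n"
    proof (cases "n \<le> N")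
      case True
      then show ?thesis
        unfolding \<mu>_def by (simp add: min.coboundedI2)
    next
      case False
      then show ?thesis
        using N[of n] unfolding \<mu>_def by simp
    qed
  qed simp
  ultimately show False
    using assms(1) unfolding forward_Li_Yorke_pair_def D_def by simp
qed

lemma forward_Li_Yorke_pair_frequently_apart:
  assumes "forward_Li_Yorke_pair X \<alpha> x y"
  obtains e where "e > 0" "\<exists>\<^sub>F n in sequentially. e \<le> dist ((\<alpha> ^^ n) x) ((\<alpha> ^^ n) y)"
proof -
  have "\<not> (\<lambda>n. dist ((\<alpha> ^^ n) x) ((\<alpha> ^^ n) y)) \<longlonglongrightarrow> 0"
    using assms unfolding forward_Li_Yorke_pair_def by blast
  then obtain e where "e > 0" "\<not> (\<forall>\<^sub>F n in sequentially. dist ((\<alpha> ^^ n) x) ((\<alpha> ^^ n) y) < e)"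
    unfolding tendsto_iff by auto
  then show ?thesis
    using that unfolding not_eventually not_less by blast
qed

lemma forward_Li_Yorke_pair_frequently_long_agreement:
  fixes X :: "'a::metric_space set"
  assumes "compact X" "continuous_on X \<alpha>" "\<alpha> ` X \<subseteq> X" "locally_constant_on X c"
    and "forward_Li_Yorke_pair X \<alpha> x y"
  shows "\<exists>\<^sub>F n in sequentially. \<forall>j\<le>K. itinerary c \<alpha> x (n + j) = itinerary c \<alpha> y (n + j)"
proof -
  have "locally_constant_on X (\<lambda>u. \<lambda>j\<in>{..K}. (c \<circ> \<alpha> ^^ j) u)"
    using assms(2-4)
    by (intro locally_constant_on_restrict_family locally_constant_on_compose
        continuous_on_funpow funpow_image_subset) auto
  then obtain \<delta> where "\<delta> > 0" and \<delta>: "\<And>u v. \<lbrakk>u \<in> X; v \<in> X; dist u v < \<delta>\<rbrakk> \<Longrightarrow>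
      (\<lambda>j\<in>{..K}. (c \<circ> \<alpha> ^^ j) u) = (\<lambda>j\<in>{..K}. (c \<circ> \<alpha> ^^ j) v)"
    using locally_constant_on_compact_uniformly[OF assms(1)] by blast
  have iterates_in: "(\<alpha> ^^ n) x \<in> X" "(\<alpha> ^^ n) y \<in> X" for n
    using assms(5) funpow_image_subset[OF assms(3)] unfolding forward_Li_Yorke_pair_def by blast+
  have agree: "\<forall>j\<le>K. itinerary c \<alpha> x (n + j) = itinerary c \<alpha> y (n + j)"
    if "dist ((\<alpha> ^^ n) x) ((\<alpha> ^^ n) y) < \<delta>" for n
  proof (intro allI impI)
    fix j assume "j \<le> K"
    then show "itinerary c \<alpha> x (n + j) = itinerary c \<alpha> y (n + j)"
      using fun_cong[OF \<delta>[OF iterates_in that], of j]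
      by (simp add: itinerary_def funpow_add add.commute)
  qed
  show ?thesis
    using forward_Li_Yorke_pair_frequently_close[OF assms(5) \<open>\<delta> > 0\<close>]
    by (rule frequently_elim1) (rule agree)
qed

lemma forward_Li_Yorke_pair_itineraries:
  fixes X :: "'a::metric_space set"
  assumes "compact X" "totally_disconnected X" "continuous_on X \<alpha>" "\<alpha> ` X \<subseteq> X"
    and "forward_Li_Yorke_pair X \<alpha> x y"
  obtains c :: "'a \<Rightarrow> 'a set set" where "locally_constant_on X c"
    "\<exists>\<^sub>F n in sequentially. itinerary c \<alpha> x n \<noteq> itinerary c \<alpha> y n"
    "\<forall>K. \<exists>m. itinerary c \<alpha> x m \<noteq> itinerary c \<alpha> y m \<and>
              (\<forall>i\<in>{1..K}. itinerary c \<alpha> x (m + i) = itinerary c \<alpha> y (m + i))"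
proof -
  have iterates_in: "(\<alpha> ^^ n) x \<in> X" "(\<alpha> ^^ n) y \<in> X" for n
    using assms(5) funpow_image_subset[OF assms(4)] unfolding forward_Li_Yorke_pair_def by blast+
  obtain e where "e > 0" and apart: "\<exists>\<^sub>F n in sequentially. e \<le> dist ((\<alpha> ^^ n) x) ((\<alpha> ^^ n) y)"
    using forward_Li_Yorke_pair_frequently_apart[OF assms(5)] by blast
  then obtain c :: "'a \<Rightarrow> 'a set set" where c: "locally_constant_on X c"
    and small: "\<And>u v. \<lbrakk>u \<in> X; v \<in> X; c u = c v\<rbrakk> \<Longrightarrow> dist u v < e"
    using totally_disconnected_compact_locally_constant_partition[OF assms(1,2)] by blast
  have disagree: "\<exists>\<^sub>F n in sequentially. itinerary c \<alpha> x n \<noteq> itinerary c \<alpha> y n"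
    using apart by (rule frequently_elim1) (use small iterates_in in \<open>force simp: itinerary_def\<close>)
  moreover have "\<exists>m. itinerary c \<alpha> x m \<noteq> itinerary c \<alpha> y m \<and>
                   (\<forall>i\<in>{1..K}. itinerary c \<alpha> x (m + i) = itinerary c \<alpha> y (m + i))" for K
  proof -
    obtain d where d: "itinerary c \<alpha> x d \<noteq> itinerary c \<alpha> y d"
      using frequently_ex[OF disagree] by blast
    obtain n where "Suc d \<le> n" and run: "\<forall>j\<le>K. itinerary c \<alpha> x (n + j) = itinerary c \<alpha> y (n + j)"
      using forward_Li_Yorke_pair_frequently_long_agreement[OF assms(1,3,4) c assms(5), of K]
      unfolding frequently_sequentially by blast
    then have "d < n"
      by simp
    show ?thesis
      using exists_last_failure_before_run[of "\<lambda>m. itinerary c \<alpha> x m = itinerary c \<alpha> y m", OF d \<open>d < n\<close> run] .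
  qed
  ultimately show ?thesis
    using that c by blast
qed

subsection \<open>An element of the Ellis semigroup that is not regular\<close>

lemma ellis_semigroup_separates_only_at_time_zero:
  fixes X :: "'a::metric_space set"
  assumes "compact X" "continuous_on X \<alpha>" "\<alpha> ` X \<subseteq> X" "locally_constant_on X c" "x \<in> X" "y \<in> X"
    and runs: "\<forall>K. \<exists>m. itinerary c \<alpha> x m \<noteq> itinerary c \<alpha> y m \<and>
                  (\<forall>i\<in>{1..K}. itinerary c \<alpha> x (m + i) = itinerary c \<alpha> y (m + i))"
  obtains q where "q \<in> ellis_semigroup X \<alpha>" "c (q x) \<noteq> c (q y)"
    "itinerary c \<alpha> (\<alpha> (q x)) = itinerary c \<alpha> (\<alpha> (q y))"
proof -
  define M where "M K = {m. itinerary c \<alpha> x m \<noteq> itinerary c \<alpha> y m \<and>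
                      (\<forall>i\<in>{1..K}. itinerary c \<alpha> x (m + i) = itinerary c \<alpha> y (m + i))}" for K
  have "M K \<noteq> {}" "M (Suc K) \<subseteq> M K" for K
    using runs unfolding M_def by auto
  then obtain q where q: "\<And>K. q \<in> maps_top X closure_of {restrict (\<alpha> ^^ m) X | m. m \<in> M K}"
    using maps_top_limit_of_nested_iterates[OF assms(1,3)] by blast
  have "q \<in> ellis_semigroup X \<alpha>"
    using closure_of_mono[of "{restrict (\<alpha> ^^ m) X | m. m \<in> M 0}" "{restrict (\<alpha> ^^ n) X | n. True}"] q
    unfolding ellis_semigroup_def by blast
  moreover have "c (q x) \<noteq> c (q y)"
  proof -
    obtain m where "m \<in> M 0" "itinerary c \<alpha> x (0 + m) = itinerary c \<alpha> (q x) 0"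
      "itinerary c \<alpha> y (0 + m) = itinerary c \<alpha> (q y) 0"
      using closure_of_iterates_itinerary_approx[OF assms(2-4) q assms(5,6)] .
    then show ?thesis
      unfolding M_def by (simp add: itinerary_def)
  qed
  moreover have "itinerary c \<alpha> (\<alpha> (q x)) = itinerary c \<alpha> (\<alpha> (q y))"
  proof
    fix i
    obtain m where "m \<in> M (Suc i)" "itinerary c \<alpha> x (Suc i + m) = itinerary c \<alpha> (q x) (Suc i)"
      "itinerary c \<alpha> y (Suc i + m) = itinerary c \<alpha> (q y) (Suc i)"
      using closure_of_iterates_itinerary_approx[OF assms(2-4) q assms(5,6)] .
    moreover have "itinerary c \<alpha> x (Suc i + m) = itinerary c \<alpha> y (Suc i + m)"
      using \<open>m \<in> M (Suc i)\<close> unfolding M_def by (auto simp: add.commute dest: bspec[where x = "Suc i"])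
    ultimately have "itinerary c \<alpha> (q x) (Suc i) = itinerary c \<alpha> (q y) (Suc i)"
      by simp
    then show "itinerary c \<alpha> (\<alpha> (q x)) i = itinerary c \<alpha> (\<alpha> (q y)) i"
      by (simp add: itinerary_apply)
  qed
  ultimately show ?thesis
    using that by blast
qed

lemma mcomp_regular_apply:
  assumes "q = mcomp X (mcomp X q z) q" "w \<in> X" "q w \<in> X"
  shows "q (z (q w)) = q w"
proof -
  have "q w = mcomp X (mcomp X q z) q w"
    using assms(1) by (rule fun_cong)
  also have "\<dots> = q (z (q w))"
    using assms(2,3) by (simp add: mcomp_def)
  finally show ?thesis
    by (rule sym)
qed

lemma ellis_semigroup_element_not_regular:
  fixes X :: "'a::metric_space set"
  assumes "continuous_on X \<alpha>" "\<alpha> ` X \<subseteq> X" "locally_constant_on X c" "x \<in> X" "y \<in> X"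
    and "itinerary c \<alpha> (\<alpha> x) \<noteq> itinerary c \<alpha> (\<alpha> y)"
    and q: "q \<in> ellis_semigroup X \<alpha>" "c (q x) \<noteq> c (q y)"
      "itinerary c \<alpha> (\<alpha> (q x)) = itinerary c \<alpha> (\<alpha> (q y))"
    and z: "z \<in> ellis_semigroup X \<alpha>"
  shows "q \<noteq> mcomp X (mcomp X q z) q"
proof
  assume regular: "q = mcomp X (mcomp X q z) q"
  let ?E1 = "maps_top X closure_of {restrict (\<alpha> ^^ n) X | n. n \<in> {1..}}"
  have qx: "q x \<in> X" "q y \<in> X"
    using ellis_semigroup_apply_in q(1) assms(4,5) by blast+
  have "itinerary c \<alpha> (q (z (q x))) = itinerary c \<alpha> (q (z (q y)))"
  proof (cases "z \<in> ?E1")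
    case True
    show ?thesis
      using ellis_semigroup_preserves_itinerary_eq[OF assms(1-3) q(1)
          ellis_semigroup_apply_in[OF z qx(1)] ellis_semigroup_apply_in[OF z qx(2)]
          closure_of_positive_iterates_itinerary_eq[OF assms(1-3) True qx q(3)]] .
  next
    case False
    then have "z = restrict id X"
      using ellis_semigroup_subset_insert_id[of X \<alpha>] z by blast
    have "q \<noteq> restrict id X"
    proof
      assume "q = restrict id X"
      then have "q x = x" "q y = y"
        using assms(4,5) by simp_all
      then show False
        using assms(6) q(3) by simp
    qed
    then have "q \<in> ?E1"
      using ellis_semigroup_subset_insert_id[of X \<alpha>] q(1) by blast
    with \<open>z = restrict id X\<close> show ?thesis
      using closure_of_positive_iterates_itinerary_eq[OF assms(1-3) \<open>q \<in> ?E1\<close> qx q(3)] qx by simp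
  qed
  then have same: "itinerary c \<alpha> (q x) = itinerary c \<alpha> (q y)"
    using mcomp_regular_apply[OF regular] assms(4,5) qx by simp
  show False
    using fun_cong[OF same, of 0] q(2) by (simp add: itinerary_def)
qed

theorem proposition4p11:
  fixes X :: "'a::metric_space set" and \<alpha> :: "'a \<Rightarrow> 'a"
  assumes "compact X" and "totally_disconnected X"
    and "continuous_on X \<alpha>" and "\<alpha> ` X = X"
    and "\<exists>x y. forward_Li_Yorke_pair X \<alpha> x y"
  shows "\<not> completely_regular (ellis_semigroup X \<alpha>) (mcomp X)"
proof -
  obtain x y where LY: "forward_Li_Yorke_pair X \<alpha> x y"
    using assms(5) by blast
  then have "x \<in> X" "y \<in> X"
    unfolding forward_Li_Yorke_pair_def by simp_all
  have \<alpha>X: "\<alpha> ` X \<subseteq> X"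
    using assms(4) by simp
  obtain c :: "'a \<Rightarrow> 'a set set" where c: "locally_constant_on X c"
    and disagree: "\<exists>\<^sub>F n in sequentially. itinerary c \<alpha> x n \<noteq> itinerary c \<alpha> y n"
    and runs: "\<forall>K. \<exists>m. itinerary c \<alpha> x m \<noteq> itinerary c \<alpha> y m \<and>
                    (\<forall>i\<in>{1..K}. itinerary c \<alpha> x (m + i) = itinerary c \<alpha> y (m + i))"
    using forward_Li_Yorke_pair_itineraries[OF assms(1-3) \<alpha>X LY] by blast
  obtain q where "q \<in> ellis_semigroup X \<alpha>" "c (q x) \<noteq> c (q y)"
    "itinerary c \<alpha> (\<alpha> (q x)) = itinerary c \<alpha> (\<alpha> (q y))"
    using ellis_semigroup_separates_only_at_time_zero[OF assms(1,3) \<alpha>X c \<open>x \<in> X\<close> \<open>y \<in> X\<close> runs] .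
  with frequently_itinerary_ne_imp_itinerary_apply_ne[OF disagree]
  have "\<forall>z\<in>ellis_semigroup X \<alpha>. q \<noteq> mcomp X (mcomp X q z) q"
    using ellis_semigroup_element_not_regular[OF assms(3) \<alpha>X c \<open>x \<in> X\<close> \<open>y \<in> X\<close>] by blast
  then show ?thesis
    using \<open>q \<in> ellis_semigroup X \<alpha>\<close> unfolding completely_regular_def by blast
qed

end
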